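(* Let $U\trianglelefteq S\le W$ and $R=(U\times U)\langle\sigma\rangle\{(s,s):s\in S\}$. Then \[N_W(R)=(V\times V)\langle\sigma\rangle\{(t,t):t\in T\},\] where $V=\Omega(S,U)$ and $T=N_W(U)\cap N_W(S)$. Furthermore $V$ is a normal subgroup of $T$, $[V\times V,R]\le(U\times U)\{(v,v):v\in V\}$, the quotient $V/U$ is a $T/S$-module, and $N_W(R)/R\cong(V/U)(T/S)$.
   Context: $W$ is the isometry group of the binary rooted tree $\{0,1\}^*$. Elements are written $(g_0,g_1)\pi$ with $\pi\in\mathrm{Sym}(\{0,1\})$, meaning $(xw)\mapsto x^\pi w^{g_x}$; $\sigma$ is the isometry swapping the two subtrees at the root rigidly; $U\times U=\{(u,u'):u,u'\in U\}$. For groups $K\trianglelefteq G$, $\Omega(G,K)=\{v\in G: v^2\in K\text{ and }[G,v]\le K\}$. The notation $(V/U)(T/S)$ denotes a product of (a group isomorphic to) $V/U$ with (a group isomorphic to) $T/S$, as in the paper. *)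

theory Defs
  imports "HOL-Algebra.Algebra"
begin

text \<open>Vertices of the binary rooted tree are words over the alphabet bool
  (False = 0, True = 1).\<close>

definition tree_isom :: "(bool list \<Rightarrow> bool list) \<Rightarrow> bool" where
  "tree_isom f \<longleftrightarrow> bij f \<and> (\<forall>w. length (f w) = length w)
      \<and> (\<forall>w k. f (take k w) = take k (f w))"

text \<open>The group W, acting on the right: w^(g h) = (w^g)^h, so the product
  g h is the function "first g, then h".\<close>

definition W :: "(bool list \<Rightarrow> bool list) monoid" where
  "W = \<lparr>carrier = {f. tree_isom f}, monoid.mult = (\<lambda>g h. h \<circ> g), one = id\<rparr>"

definition tpair :: "(bool list \<Rightarrow> bool list) \<Rightarrow> (bool list \<Rightarrow> bool list)
    \<Rightarrow> bool list \<Rightarrow> bool list" where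
  "tpair g0 g1 w = (case w of [] \<Rightarrow> [] | x # v \<Rightarrow> x # (if x then g1 v else g0 v))"

definition sigma :: "bool list \<Rightarrow> bool list" where
  "sigma w = (case w of [] \<Rightarrow> [] | x # v \<Rightarrow> (\<not> x) # v)"

definition prodset :: "(bool list \<Rightarrow> bool list) set \<Rightarrow> (bool list \<Rightarrow> bool list) set
    \<Rightarrow> (bool list \<Rightarrow> bool list) set" where
  "prodset U U' = {tpair u u' | u u'. u \<in> U \<and> u' \<in> U'}"

definition diagset :: "(bool list \<Rightarrow> bool list) set \<Rightarrow> (bool list \<Rightarrow> bool list) set" where
  "diagset S = {tpair s s | s. s \<in> S}"

definition gcomm :: "('a, 'b) monoid_scheme \<Rightarrow> 'a \<Rightarrow> 'a \<Rightarrow> 'a" where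
  "gcomm G g h = inv\<^bsub>G\<^esub> g \<otimes>\<^bsub>G\<^esub> inv\<^bsub>G\<^esub> h \<otimes>\<^bsub>G\<^esub> g \<otimes>\<^bsub>G\<^esub> h"

definition comm_subgroup :: "('a, 'b) monoid_scheme \<Rightarrow> 'a set \<Rightarrow> 'a set \<Rightarrow> 'a set" where
  "comm_subgroup G A B = generate G {gcomm G a b | a b. a \<in> A \<and> b \<in> B}"

definition Omega :: "('a, 'b) monoid_scheme \<Rightarrow> 'a set \<Rightarrow> 'a set \<Rightarrow> 'a set" where
  "Omega H G K = {v \<in> G. v \<otimes>\<^bsub>H\<^esub> v \<in> K \<and> comm_subgroup H G {v} \<subseteq> K}"

end

theory Submission
  imports Defs
begin

text \<open>Every isometry is \<open>(a,b)\<close> or \<open>(a,b)\<sigma>\<close>, and \<open>R\<close> consists of the elements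
  \<open>(x,y)\<close> and \<open>(x,y)\<sigma>\<close> with \<open>x, y \<in> S\<close> and \<open>x y\<inverse> \<in> U\<close>. Conjugating the elements
  \<open>(s,s)\<close>, \<open>(u,1)\<close>, \<open>(1,u)\<close> and \<open>\<sigma>\<close> of \<open>R\<close> by \<open>(a,b)\<close> shows that \<open>(a,b)\<close> can only
  normalise \<open>R\<close> if \<open>a, b \<in> T\<close> and \<open>c = a b\<inverse>\<close> satisfies \<open>c\<^sup>2 \<in> U\<close> and \<open>[S,c] \<le> U\<close>,
  that is \<open>c \<in> V\<close>. Conversely \<open>(t,t)\<close> for \<open>t \<in> T\<close> and \<open>(1,v)\<close> for \<open>v \<in> V\<close> normalise \<open>R\<close>,
  and as \<open>\<sigma> \<in> R\<close> this determines \<open>N\<^sub>W(R)\<close>. The maps \<open>t \<mapsto> R(t,t)\<close> and \<open>v \<mapsto> R(1,v)\<close> into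
  \<open>N\<^sub>W(R)/R\<close> have kernels \<open>S\<close> and \<open>U\<close>, and their images together exhaust the quotient. The properties
  of \<open>V = \<Omega>(S,U)\<close> itself (a subgroup, normal in \<open>T\<close>, with \<open>V/U\<close> abelian and acted on by
  \<open>T/S\<close>) hold in any group.\<close>

section \<open>Conjugation, cosets and quotients\<close>

lemma (in group) mult_inv_cancel_left:
  "x \<in> carrier G \<Longrightarrow> y \<in> carrier G \<Longrightarrow> x \<otimes> (inv x \<otimes> y) = y"
  by (simp add: m_assoc [symmetric])

lemma (in group) inv_mult_cancel_left:
  "x \<in> carrier G \<Longrightarrow> y \<in> carrier G \<Longrightarrow> inv x \<otimes> (x \<otimes> y) = y"
  by (simp add: m_assoc [symmetric])

lemmas (in group) group_normalize =
  m_assoc inv_mult_group mult_inv_cancel_left inv_mult_cancel_left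

lemma (in group) normal_subgroup_conj_closed:
  assumes "subgroup H G" "N \<lhd> G\<lparr>carrier := H\<rparr>" "x \<in> H" "n \<in> N"
  shows "x \<otimes> n \<otimes> inv x \<in> N"
  using group.normal_invE(2)[OF subgroup_imp_group[OF assms(1)] assms(2)] assms(3,4)
    m_inv_consistent[OF assms(1)] by simp

lemma (in group) normal_in_subgroupI:
  assumes "subgroup N G" "subgroup H G" "N \<subseteq> H"
    and "\<And>x n. x \<in> H \<Longrightarrow> n \<in> N \<Longrightarrow> x \<otimes> n \<otimes> inv x \<in> N"
  shows "N \<lhd> G\<lparr>carrier := H\<rparr>"
proof (rule group.normal_invI[OF subgroup_imp_group[OF assms(2)]])
  show "subgroup N (G\<lparr>carrier := H\<rparr>)" by (rule subgroup_incl[OF assms(1-3)])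
qed (use assms(4) m_inv_consistent[OF assms(2)] in simp)

lemma (in group) normalizer_iff:
  assumes "H \<subseteq> carrier G"
  shows "g \<in> normalizer G H \<longleftrightarrow>
    g \<in> carrier G \<and> (\<forall>h\<in>H. g \<otimes> h \<otimes> inv g \<in> H) \<and> (\<forall>h\<in>H. inv g \<otimes> h \<otimes> g \<in> H)"
proof -
  have conj: "g <#\<^bsub>G\<^esub> H #>\<^bsub>G\<^esub> inv g = (\<lambda>h. g \<otimes> h \<otimes> inv g) ` H"
    by (auto simp: l_coset_def r_coset_def)
  have "g \<in> normalizer G H \<longleftrightarrow> g \<in> carrier G \<and> (\<lambda>h. g \<otimes> h \<otimes> inv g) ` H = H"
    unfolding normalizer_def stabilizer_def using assms conj by auto
  also have "\<dots> \<longleftrightarrow> g \<in> carrier G \<and> (\<forall>h\<in>H. g \<otimes> h \<otimes> inv g \<in> H) \<and> (\<forall>h\<in>H. inv g \<otimes> h \<otimes> g \<in> H)"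
  proof (rule conj_cong[OF refl])
    assume g: "g \<in> carrier G"
    have inv_conj: "g \<otimes> (inv g \<otimes> h \<otimes> g) \<otimes> inv g = h" if "h \<in> H" for h
      using that assms g by (auto simp: group_normalize)
    show "(\<lambda>h. g \<otimes> h \<otimes> inv g) ` H = H \<longleftrightarrow>
        (\<forall>h\<in>H. g \<otimes> h \<otimes> inv g \<in> H) \<and> (\<forall>h\<in>H. inv g \<otimes> h \<otimes> g \<in> H)"
    proof safe
      fix h assume "(\<lambda>h. g \<otimes> h \<otimes> inv g) ` H = H" "h \<in> H"
      then obtain h' where "h' \<in> H" "h = g \<otimes> h' \<otimes> inv g" by blast
      then show "inv g \<otimes> h \<otimes> g \<in> H" using assms g by (auto simp: group_normalize)
    next
      fix h assume "\<forall>h\<in>H. inv g \<otimes> h \<otimes> g \<in> H" "h \<in> H"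
      then show "h \<in> (\<lambda>h. g \<otimes> h \<otimes> inv g) ` H" using inv_conj by (metis image_eqI)
    qed auto
  qed
  finally show ?thesis .
qed

lemma (in group) rcos_eqI:
  assumes "subgroup H G" "x \<in> carrier G" "y \<in> carrier G" "y \<otimes> inv x \<in> H"
  shows "H #> x = H #> y"
  using repr_independence subgroup.rcos_module_rev[OF assms(1) is_group] assms by blast

lemma (in group) rcos_eq_self_iff:
  assumes "subgroup H G" "g \<in> carrier G"
  shows "H #> g = H \<longleftrightarrow> g \<in> H"
  using rcos_self[OF assms(2,1)] coset_join2[OF assms(2,1)] by auto

lemma r_coset_carrier_update [simp]: "r_coset (G\<lparr>carrier := A\<rparr>) = r_coset G"
  by (intro ext) (simp add: r_coset_def)

lemma set_mult_carrier_update [simp]: "set_mult (G\<lparr>carrier := A\<rparr>) = set_mult G"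
  by (intro ext) (simp add: set_mult_def)

lemma carrier_FactGroup_update: "carrier (G\<lparr>carrier := H\<rparr> Mod N) = {N #>\<^bsub>G\<^esub> h | h. h \<in> H}"
  by (auto simp: FactGroup_def RCOSETS_def)

lemma mult_FactGroup_update:
  assumes "N \<lhd> G\<lparr>carrier := H\<rparr>" "h \<in> H" "k \<in> H"
  shows "(N #>\<^bsub>G\<^esub> h) \<otimes>\<^bsub>G\<lparr>carrier := H\<rparr> Mod N\<^esub> (N #>\<^bsub>G\<^esub> k) = N #>\<^bsub>G\<^esub> (h \<otimes>\<^bsub>G\<^esub> k)"
  using normal.rcos_sum[OF assms(1)] assms(2,3) by (simp add: FactGroup_def)

lemma (in group) subgroup_set_mult_involution:
  assumes P: "subgroup P G" and s: "s \<in> carrier G" "s \<otimes> s = \<one>"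
    and conj: "\<And>p. p \<in> P \<Longrightarrow> s \<otimes> p \<otimes> s \<in> P"
  shows "subgroup (P <#> {\<one>, s}) G"
proof -
  have Pc: "p \<in> carrier G" if "p \<in> P" for p using subgroup.mem_carrier[OF P that] .
  have E: "e \<in> carrier G" "inv e = e" "e \<otimes> e = \<one>" if "e \<in> {\<one>, s}" for e
    using that s inv_equality by auto
  have E_cancel: "e \<otimes> (e \<otimes> x) = x" if "e \<in> {\<one>, s}" "x \<in> carrier G" for e x
    using that E[OF that(1)] by (simp add: m_assoc [symmetric])
  have E_conj: "e \<otimes> p \<otimes> e \<in> P" if "e \<in> {\<one>, s}" "p \<in> P" for e p
    using that conj Pc by auto
  have E_mult: "e \<otimes> f \<in> {\<one>, s}" if "e \<in> {\<one>, s}" "f \<in> {\<one>, s}" for e f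
    using that s by auto
  have mem: "g \<in> P <#> {\<one>, s} \<longleftrightarrow> (\<exists>p\<in>P. \<exists>e\<in>{\<one>, s}. g = p \<otimes> e)" for g
    unfolding set_mult_def by blast
  show ?thesis
  proof (rule subgroupI)
    show "P <#> {\<one>, s} \<subseteq> carrier G" unfolding set_mult_def using Pc s by auto
    show "P <#> {\<one>, s} \<noteq> {}" using mem subgroup.one_closed[OF P] by blast
  next
    fix g assume "g \<in> P <#> {\<one>, s}"
    then obtain p e where p: "p \<in> P" and e: "e \<in> {\<one>, s}" and g: "g = p \<otimes> e"
      using mem by blast
    have "inv g = (e \<otimes> inv p \<otimes> e) \<otimes> e"
      using Pc[OF p] E[OF e] by (simp add: g inv_mult_group m_assoc)
    then show "inv g \<in> P <#> {\<one>, s}"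
      using mem E_conj[OF e subgroup.m_inv_closed[OF P p]] e by blast
  next
    fix g h assume "g \<in> P <#> {\<one>, s}" "h \<in> P <#> {\<one>, s}"
    then obtain p e q f where p: "p \<in> P" and e: "e \<in> {\<one>, s}" and g: "g = p \<otimes> e"
      and q: "q \<in> P" and f: "f \<in> {\<one>, s}" and h: "h = q \<otimes> f"
      using mem by meson
    have "g \<otimes> h = (p \<otimes> (e \<otimes> q \<otimes> e)) \<otimes> (e \<otimes> f)"
      using Pc[OF p] Pc[OF q] E(1)[OF e] E(1)[OF f] E_cancel[OF e] by (simp add: g h m_assoc)
    then show "g \<otimes> h \<in> P <#> {\<one>, s}"
      using mem subgroup.m_closed[OF P p E_conj[OF e q]] E_mult[OF e f] by blast
  qed
qed

lemma (in group_hom) image_iso_FactGroup_kernel: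
  "H\<lparr>carrier := h ` carrier G\<rparr> \<cong> G Mod kernel G H h"
proof -
  have "group_hom G (H\<lparr>carrier := h ` carrier G\<rparr>) h"
    using H.subgroup_imp_group[OF img_is_subgroup] hom_closed hom_mult
    by (intro group_hom.intro group_hom_axioms.intro) (auto simp: hom_def)
  then have "G Mod kernel G H h \<cong> H\<lparr>carrier := h ` carrier G\<rparr>"
    using group_hom.FactGroup_iso[of G "H\<lparr>carrier := h ` carrier G\<rparr>" h]
    by (simp add: kernel_def)
  then show ?thesis
    by (rule group.iso_sym[OF normal.factorgroup_is_group[OF normal_kernel]])
qed

section \<open>The subgroup \<open>\<Omega>(S, U)\<close>\<close>

locale omega_setting = group G for G (structure) +
  fixes S U
  assumes subgroup_S: "subgroup S G"
    and normal_U: "U \<lhd> G\<lparr>carrier := S\<rparr>"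
begin

abbreviation "V \<equiv> Omega G S U"
abbreviation "T \<equiv> normalizer G U \<inter> normalizer G S"

lemma subgroup_U: "subgroup U G"
  by (rule incl_subgroup[OF subgroup_S normal_imp_subgroup[OF normal_U]])

lemma U_subset_S: "U \<subseteq> S"
  using subgroup.subset[OF normal_imp_subgroup[OF normal_U]] by simp

lemma S_carrier: "s \<in> S \<Longrightarrow> s \<in> carrier G"
  by (rule subgroup.mem_carrier[OF subgroup_S])

lemma U_carrier: "u \<in> U \<Longrightarrow> u \<in> carrier G"
  by (rule subgroup.mem_carrier[OF subgroup_U])

lemma U_conj_closed: "s \<in> S \<Longrightarrow> u \<in> U \<Longrightarrow> s \<otimes> u \<otimes> inv s \<in> U"
  by (rule normal_subgroup_conj_closed[OF subgroup_S normal_U])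

lemma U_conj_closed': "s \<in> S \<Longrightarrow> u \<in> U \<Longrightarrow> inv s \<otimes> u \<otimes> s \<in> U"
  using U_conj_closed[of "inv s" u] subgroup.m_inv_closed[OF subgroup_S] S_carrier by simp

lemma mem_Omega_iff: "v \<in> V \<longleftrightarrow> v \<in> S \<and> v \<otimes> v \<in> U \<and> (\<forall>s\<in>S. gcomm G s v \<in> U)"
proof -
  let ?C = "{gcomm G s w | s w. s \<in> S \<and> w \<in> {v}}"
  have "generate G ?C \<subseteq> U \<longleftrightarrow> ?C \<subseteq> U"
    using generate.incl[of _ ?C G] generate_subgroup_incl[OF _ subgroup_U] by blast
  then show ?thesis unfolding Omega_def comm_subgroup_def by blast
qed

lemma Omega_subset_S: "V \<subseteq> S"
  using mem_Omega_iff by blast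

lemma Omega_carrier: "v \<in> V \<Longrightarrow> v \<in> carrier G"
  using Omega_subset_S S_carrier by blast

lemma Omega_square: "v \<in> V \<Longrightarrow> v \<otimes> v \<in> U"
  using mem_Omega_iff by blast

lemma Omega_commutator: "v \<in> V \<Longrightarrow> s \<in> S \<Longrightarrow> v \<otimes> s \<otimes> inv v \<otimes> inv s \<in> U"
proof -
  assume v: "v \<in> V" and s: "s \<in> S"
  have "gcomm G (inv s) v \<in> U"
    using v s subgroup.m_inv_closed[OF subgroup_S] mem_Omega_iff by blast
  then have "v \<otimes> gcomm G (inv s) v \<otimes> inv v \<in> U"
    using v Omega_subset_S U_conj_closed by blast
  moreover have "v \<otimes> gcomm G (inv s) v \<otimes> inv v = v \<otimes> s \<otimes> inv v \<otimes> inv s"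
    using Omega_carrier[OF v] S_carrier[OF s] by (simp add: gcomm_def group_normalize)
  ultimately show ?thesis by simp
qed

lemma Omega_commutator': "v \<in> V \<Longrightarrow> s \<in> S \<Longrightarrow> s \<otimes> v \<otimes> inv s \<otimes> inv v \<in> U"
proof -
  assume v: "v \<in> V" and s: "s \<in> S"
  have "inv (v \<otimes> s \<otimes> inv v \<otimes> inv s) \<in> U"
    using Omega_commutator[OF v s] subgroup.m_inv_closed[OF subgroup_U] by blast
  then show ?thesis using Omega_carrier[OF v] S_carrier[OF s] by (simp add: group_normalize)
qed

lemma U_subset_Omega: "U \<subseteq> V"
proof
  fix u assume u: "u \<in> U"
  have "gcomm G s u \<in> U" if s: "s \<in> S" for s
  proof -
    have "(inv s \<otimes> inv u \<otimes> s) \<otimes> u \<in> U"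
      using U_conj_closed'[OF s] u subgroup.m_inv_closed[OF subgroup_U]
        subgroup.m_closed[OF subgroup_U] by blast
    then show ?thesis by (simp add: gcomm_def)
  qed
  then show "u \<in> V"
    using u U_subset_S subgroup.m_closed[OF subgroup_U] mem_Omega_iff by blast
qed

lemma subgroup_Omega: "subgroup V G"
proof (rule subgroupI)
  show "V \<subseteq> carrier G" using Omega_carrier by blast
  show "V \<noteq> {}" using U_subset_Omega subgroup.one_closed[OF subgroup_U] by blast
next
  fix v assume v: "v \<in> V"
  have vS: "inv v \<in> S" using v Omega_subset_S subgroup.m_inv_closed[OF subgroup_S] by blast
  have "inv v \<otimes> inv v = inv (v \<otimes> v)" using Omega_carrier[OF v] by (simp add: inv_mult_group)
  then have sq: "inv v \<otimes> inv v \<in> U"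
    using Omega_square[OF v] subgroup.m_inv_closed[OF subgroup_U] by simp
  have "gcomm G s (inv v) \<in> U" if s: "s \<in> S" for s
  proof -
    have "inv (v \<otimes> inv s \<otimes> inv v \<otimes> inv (inv s)) \<in> U"
      using Omega_commutator[OF v] s subgroup.m_inv_closed[OF subgroup_S]
        subgroup.m_inv_closed[OF subgroup_U] by blast
    then show ?thesis
      using Omega_carrier[OF v] S_carrier[OF s] by (simp add: gcomm_def group_normalize)
  qed
  then show "inv v \<in> V" using vS sq mem_Omega_iff by blast
next
  fix v w assume v: "v \<in> V" and w: "w \<in> V"
  have vc: "v \<in> carrier G" and wc: "w \<in> carrier G" using v w Omega_carrier by auto
  have vS: "v \<in> S" and wS: "w \<in> S" using v w Omega_subset_S by auto
  \<comment> \<open>\<open>(vw)\<^sup>2 = v [w\<inverse>, v\<inverse>] v\<inverse> \<cdot> v\<^sup>2 \<cdot> w\<^sup>2\<close>\<close>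
  have "v \<otimes> (w \<otimes> v \<otimes> inv w \<otimes> inv v) \<otimes> inv v \<in> U"
    by (rule U_conj_closed[OF vS Omega_commutator[OF w vS]])
  then have "v \<otimes> (w \<otimes> v \<otimes> inv w \<otimes> inv v) \<otimes> inv v \<otimes> (v \<otimes> v) \<otimes> (w \<otimes> w) \<in> U"
    using Omega_square[OF v] Omega_square[OF w] subgroup.m_closed[OF subgroup_U] by blast
  then have sq: "(v \<otimes> w) \<otimes> (v \<otimes> w) \<in> U"
    using vc wc by (simp add: group_normalize)
  have "gcomm G s (v \<otimes> w) \<in> U" if s: "s \<in> S" for s
  proof -
    have "gcomm G s w \<otimes> (inv w \<otimes> gcomm G s v \<otimes> w) \<in> U"
      using mem_Omega_iff v w s U_conj_closed' subgroup.m_closed[OF subgroup_U] by blast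
    then show ?thesis
      using vc wc S_carrier[OF s] by (simp add: gcomm_def group_normalize)
  qed
  then show "v \<otimes> w \<in> V" using subgroup.m_closed[OF subgroup_S vS wS] sq mem_Omega_iff by blast
qed

lemma gcomm_Omega_S: "v \<in> V \<Longrightarrow> s \<in> S \<Longrightarrow> gcomm G v s \<in> U"
  using Omega_commutator[of "inv v" "inv s"] subgroup.m_inv_closed[OF subgroup_Omega]
    subgroup.m_inv_closed[OF subgroup_S] Omega_carrier S_carrier
  by (simp add: gcomm_def)

lemma mem_OmegaI:
  assumes c: "c \<in> S" "c \<otimes> c \<in> U" and comm: "\<And>s. s \<in> S \<Longrightarrow> c \<otimes> s \<otimes> inv c \<otimes> inv s \<in> U"
  shows "c \<in> V"
proof -
  have "gcomm G s c \<in> U" if s: "s \<in> S" for s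
  proof -
    have "inv c \<otimes> (c \<otimes> inv s \<otimes> inv c \<otimes> inv (inv s)) \<otimes> inv (inv c) \<in> U"
      using U_conj_closed comm s c subgroup.m_inv_closed[OF subgroup_S] by blast
    then show ?thesis using S_carrier[OF s] S_carrier[OF c(1)] by (simp add: gcomm_def group_normalize)
  qed
  then show ?thesis using c mem_Omega_iff by blast
qed

lemma subgroup_T: "subgroup T G"
  using subgroups_Inter_pair normalizer_imp_subgroup subgroup.subset subgroup_U subgroup_S
  by metis

lemma T_carrier: "t \<in> T \<Longrightarrow> t \<in> carrier G"
  by (rule subgroup.mem_carrier[OF subgroup_T])

lemma T_conj_closed:
  assumes "t \<in> T"
  shows "u \<in> U \<Longrightarrow> t \<otimes> u \<otimes> inv t \<in> U" and "s \<in> S \<Longrightarrow> t \<otimes> s \<otimes> inv t \<in> S"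
  using assms normalizer_iff[OF subgroup.subset[OF subgroup_U]]
    normalizer_iff[OF subgroup.subset[OF subgroup_S]] by blast+

lemma T_conj_closed':
  assumes "t \<in> T"
  shows "u \<in> U \<Longrightarrow> inv t \<otimes> u \<otimes> t \<in> U" and "s \<in> S \<Longrightarrow> inv t \<otimes> s \<otimes> t \<in> S"
  using T_conj_closed[OF subgroup.m_inv_closed[OF subgroup_T assms]] T_carrier[OF assms] by simp_all

lemma mem_T_iff:
  "t \<in> T \<longleftrightarrow> t \<in> carrier G
     \<and> (\<forall>u\<in>U. t \<otimes> u \<otimes> inv t \<in> U) \<and> (\<forall>u\<in>U. inv t \<otimes> u \<otimes> t \<in> U)
     \<and> (\<forall>s\<in>S. t \<otimes> s \<otimes> inv t \<in> S) \<and> (\<forall>s\<in>S. inv t \<otimes> s \<otimes> t \<in> S)"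
  using normalizer_iff[OF subgroup.subset[OF subgroup_U]]
    normalizer_iff[OF subgroup.subset[OF subgroup_S]] by blast

lemma S_subset_T: "S \<subseteq> T"
proof
  fix s assume "s \<in> S"
  then show "s \<in> T"
    unfolding mem_T_iff using S_carrier U_conj_closed U_conj_closed'
      subgroup.m_closed[OF subgroup_S] subgroup.m_inv_closed[OF subgroup_S] by simp
qed

lemma Omega_subset_T: "V \<subseteq> T"
  using Omega_subset_S S_subset_T by blast

lemma Omega_conj_closed:
  assumes t: "t \<in> T" and v: "v \<in> V"
  shows "t \<otimes> v \<otimes> inv t \<in> V"
proof -
  have tc: "t \<in> carrier G" and vc: "v \<in> carrier G" using T_carrier[OF t] Omega_carrier[OF v] .
  have "t \<otimes> (v \<otimes> v) \<otimes> inv t \<in> U" by (rule T_conj_closed(1)[OF t Omega_square[OF v]])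
  then have sq: "(t \<otimes> v \<otimes> inv t) \<otimes> (t \<otimes> v \<otimes> inv t) \<in> U"
    using tc vc by (simp add: group_normalize)
  have "gcomm G s (t \<otimes> v \<otimes> inv t) \<in> U" if s: "s \<in> S" for s
  proof -
    have "t \<otimes> gcomm G (inv t \<otimes> s \<otimes> t) v \<otimes> inv t \<in> U"
      using T_conj_closed(1)[OF t] T_conj_closed'(2)[OF t s] v mem_Omega_iff by blast
    then show ?thesis using tc vc S_carrier[OF s] by (simp add: gcomm_def group_normalize)
  qed
  then show ?thesis
    using T_conj_closed(2)[OF t] Omega_subset_S v sq mem_Omega_iff by blast
qed

lemma normal_Omega_T: "V \<lhd> G\<lparr>carrier := T\<rparr>"
  using normal_in_subgroupI[OF subgroup_Omega subgroup_T Omega_subset_T] Omega_conj_closed .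

lemma normal_S_T: "S \<lhd> G\<lparr>carrier := T\<rparr>"
  using normal_in_subgroupI[OF subgroup_S subgroup_T S_subset_T] T_conj_closed(2) .

lemma normal_U_Omega: "U \<lhd> G\<lparr>carrier := V\<rparr>"
  using normal_in_subgroupI[OF subgroup_U subgroup_Omega U_subset_Omega]
    U_conj_closed Omega_subset_S by blast

lemma comm_group_Omega_Mod: "comm_group (G\<lparr>carrier := V\<rparr> Mod U)"
proof (rule group.group_comm_groupI[OF normal.factorgroup_is_group[OF normal_U_Omega]])
  fix A B assume "A \<in> carrier (G\<lparr>carrier := V\<rparr> Mod U)" "B \<in> carrier (G\<lparr>carrier := V\<rparr> Mod U)"
  then obtain v w where v: "v \<in> V" "A = U #> v" and w: "w \<in> V" "B = U #> w"
    unfolding carrier_FactGroup_update by blast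
  have "U #> (v \<otimes> w) = U #> (w \<otimes> v)"
  proof (rule rcos_eqI[OF subgroup_U])
    have "w \<otimes> v \<otimes> inv w \<otimes> inv v \<in> U" using Omega_commutator w v Omega_subset_S by blast
    then show "w \<otimes> v \<otimes> inv (v \<otimes> w) \<in> U"
      using Omega_carrier v w by (simp add: group_normalize)
  qed (use Omega_carrier v w in auto)
  then show "A \<otimes>\<^bsub>G\<lparr>carrier := V\<rparr> Mod U\<^esub> B = B \<otimes>\<^bsub>G\<lparr>carrier := V\<rparr> Mod U\<^esub> A"
    using v w mult_FactGroup_update[OF normal_U_Omega] by simp
qed

abbreviation "V_mod_U \<equiv> G\<lparr>carrier := V\<rparr> Mod U"
abbreviation "T_mod_S \<equiv> G\<lparr>carrier := T\<rparr> Mod S"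

lemma conj_coset_indep:
  assumes t: "t \<in> T" and v: "v \<in> V" and t': "t' \<in> S #> t" and v': "v' \<in> U #> v"
  shows "U #> (t' \<otimes> v' \<otimes> inv t') = U #> (t \<otimes> v \<otimes> inv t)"
proof -
  obtain s where s: "s \<in> S" "t' = s \<otimes> t" using t' by (auto simp: r_coset_def)
  obtain u where u: "u \<in> U" "v' = u \<otimes> v" using v' by (auto simp: r_coset_def)
  have c: "t \<in> carrier G" "v \<in> carrier G" "s \<in> carrier G" "u \<in> carrier G"
    using T_carrier[OF t] Omega_carrier[OF v] S_carrier[OF s(1)] U_carrier[OF u(1)] .
  define w where "w = t \<otimes> v \<otimes> inv t"
  have "(s \<otimes> (t \<otimes> u \<otimes> inv t) \<otimes> inv s) \<otimes> (s \<otimes> w \<otimes> inv s \<otimes> inv w) \<in> U"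
    using U_conj_closed[OF s(1) T_conj_closed(1)[OF t u(1)]]
      Omega_commutator'[OF Omega_conj_closed[OF t v] s(1)]
      subgroup.m_closed[OF subgroup_U] unfolding w_def by blast
  then have "(t' \<otimes> v' \<otimes> inv t') \<otimes> inv w \<in> U"
    using s u c unfolding w_def by (simp add: group_normalize)
  then show ?thesis
    using s u c unfolding w_def by (intro rcos_eqI[OF subgroup_U, symmetric]) simp_all
qed

text \<open>\<open>T/S\<close> acts on \<open>V/U\<close> by conjugating arbitrarily chosen representatives, which is
  well defined by \<open>conj_coset_indep\<close>; the map is restricted to \<open>V/U\<close> so that it is
  extensional, as \<open>BijGroup\<close> requires.\<close>

definition conj_action :: "'a set \<Rightarrow> 'a set \<Rightarrow> 'a set" where
  "conj_action A = (\<lambda>B \<in> carrier V_mod_U.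
     U #> (some_elem A \<otimes> some_elem B \<otimes> inv (some_elem A)))"

lemma conj_action_coset:
  assumes t: "t \<in> T" and v: "v \<in> V"
  shows "conj_action (S #> t) (U #> v) = U #> (t \<otimes> v \<otimes> inv t)"
proof -
  have "U #> v \<in> carrier V_mod_U" using v unfolding carrier_FactGroup_update by blast
  moreover have "some_elem (S #> t) \<in> S #> t" "some_elem (U #> v) \<in> U #> v"
    using rcos_self[OF T_carrier[OF t] subgroup_S] rcos_self[OF Omega_carrier[OF v] subgroup_U]
    by (auto intro: some_elem_nonempty)
  ultimately show ?thesis
    unfolding conj_action_def using conj_coset_indep[OF t v] by simp
qed

lemma conj_action_closed:
  assumes "t \<in> T" "B \<in> carrier V_mod_U"
  shows "conj_action (S #> t) B \<in> carrier V_mod_U"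
  using assms Omega_conj_closed conj_action_coset
  unfolding carrier_FactGroup_update by auto

lemma conj_action_mult:
  assumes t: "t \<in> T" and t': "t' \<in> T"
  shows "conj_action (S #> (t \<otimes> t'))
    = compose (carrier V_mod_U) (conj_action (S #> t)) (conj_action (S #> t'))"
proof
  fix B
  show "conj_action (S #> (t \<otimes> t')) B
    = compose (carrier V_mod_U) (conj_action (S #> t)) (conj_action (S #> t')) B"
  proof (cases "B \<in> carrier V_mod_U")
    case True
    then obtain v where v: "v \<in> V" "B = U #> v" unfolding carrier_FactGroup_update by blast
    have "t \<otimes> (t' \<otimes> v \<otimes> inv t') \<otimes> inv t = (t \<otimes> t') \<otimes> v \<otimes> inv (t \<otimes> t')"
      using T_carrier[OF t] T_carrier[OF t'] Omega_carrier[OF v(1)] by (simp add: group_normalize)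
    then show ?thesis
      using True v conj_action_coset t t' Omega_conj_closed subgroup.m_closed[OF subgroup_T]
      by (simp add: compose_def)
  next
    case False
    then show ?thesis by (simp add: conj_action_def compose_def)
  qed
qed

lemma conj_action_bij:
  assumes t: "t \<in> T"
  shows "conj_action (S #> t) \<in> Bij (carrier V_mod_U)"
proof -
  have t': "inv t \<in> T" using subgroup.m_inv_closed[OF subgroup_T t] .
  have cancel: "conj_action (S #> inv a) (conj_action (S #> a) B) = B"
    if a: "a \<in> T" and B: "B \<in> carrier V_mod_U" for a B
  proof -
    obtain v where v: "v \<in> V" "B = U #> v" using B unfolding carrier_FactGroup_update by blast
    have "inv a \<otimes> (a \<otimes> v \<otimes> inv a) \<otimes> inv (inv a) = v"
      using T_carrier[OF a] Omega_carrier[OF v(1)] by (simp add: group_normalize)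
    then show ?thesis
      using v conj_action_coset a subgroup.m_inv_closed[OF subgroup_T] Omega_conj_closed by simp
  qed
  show ?thesis
    unfolding Bij_def
  proof (intro IntI CollectI)
    show "conj_action (S #> t) \<in> extensional (carrier V_mod_U)"
      by (simp add: conj_action_def)
    show "bij_betw (conj_action (S #> t)) (carrier V_mod_U) (carrier V_mod_U)"
      by (rule bij_betw_byWitness[where f' = "conj_action (S #> inv t)"])
        (use cancel[OF t] cancel[OF t'] t t' T_carrier conj_action_closed in auto)
  qed
qed

lemma conj_action_hom:
  assumes "A \<in> carrier T_mod_S"
  shows "conj_action A \<in> hom V_mod_U V_mod_U"
proof -
  obtain t where t: "t \<in> T" and A: "A = S #> t"
    using assms unfolding carrier_FactGroup_update[where H = T and N = S] by blast
  show ?thesis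
    unfolding hom_def A
  proof (intro CollectI conjI ballI)
    show "conj_action (S #> t) \<in> carrier V_mod_U \<rightarrow> carrier V_mod_U"
      using conj_action_closed[OF t] by blast
  next
    fix B C assume "B \<in> carrier V_mod_U" "C \<in> carrier V_mod_U"
    then obtain v w where v: "v \<in> V" "B = U #> v" and w: "w \<in> V" "C = U #> w"
      unfolding carrier_FactGroup_update by blast
    have "t \<otimes> (v \<otimes> w) \<otimes> inv t = (t \<otimes> v \<otimes> inv t) \<otimes> (t \<otimes> w \<otimes> inv t)"
      using T_carrier[OF t] Omega_carrier v w by (simp add: group_normalize)
    then show "conj_action (S #> t) (B \<otimes>\<^bsub>V_mod_U\<^esub> C)
        = conj_action (S #> t) B \<otimes>\<^bsub>V_mod_U\<^esub> conj_action (S #> t) C"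
      using v w t conj_action_coset Omega_conj_closed subgroup.m_closed[OF subgroup_Omega]
        mult_FactGroup_update[OF normal_U_Omega] by simp
  qed
qed

lemma group_action_conj_action:
  "group_action T_mod_S (carrier V_mod_U) conj_action"
  unfolding group_action_def group_hom_def group_hom_axioms_def hom_def
proof (intro conjI CollectI ballI)
  show "group T_mod_S" by (rule normal.factorgroup_is_group[OF normal_S_T])
  show "group (BijGroup (carrier V_mod_U))" by (rule group_BijGroup)
  show "conj_action \<in> carrier T_mod_S \<rightarrow> carrier (BijGroup (carrier V_mod_U))"
    unfolding carrier_FactGroup_update[where H = T and N = S] BijGroup_def using conj_action_bij by auto
next
  fix A B assume "A \<in> carrier T_mod_S" "B \<in> carrier T_mod_S"
  then obtain t t' where t: "t \<in> T" "A = S #> t" and t': "t' \<in> T" "B = S #> t'"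
    unfolding carrier_FactGroup_update by blast
  then show "conj_action (A \<otimes>\<^bsub>T_mod_S\<^esub> B)
      = conj_action A \<otimes>\<^bsub>BijGroup (carrier V_mod_U)\<^esub> conj_action B"
    using mult_FactGroup_update[OF normal_S_T] conj_action_mult conj_action_bij
    by (simp add: BijGroup_def)
qed

end

section \<open>The isometry group of the binary tree\<close>

lemma W_carrier: "carrier W = {f. tree_isom f}"
  by (simp add: W_def)

lemma W_mult_eq: "a \<otimes>\<^bsub>W\<^esub> b = b \<circ> a"
  by (simp add: W_def)

lemma W_one: "\<one>\<^bsub>W\<^esub> = id"
  by (simp add: W_def)

lemma tree_isom_length: "tree_isom g \<Longrightarrow> length (g w) = length w"
  by (simp add: tree_isom_def)

lemma tree_isom_take: "tree_isom g \<Longrightarrow> g (take k w) = take k (g w)"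
  by (simp add: tree_isom_def)

lemma tree_isom_comp: "tree_isom f \<Longrightarrow> tree_isom g \<Longrightarrow> tree_isom (f \<circ> g)"
  unfolding tree_isom_def by (auto intro: bij_comp)

lemma tree_isom_inv:
  assumes "tree_isom f"
  shows "tree_isom (inv_into UNIV f)"
proof -
  have f: "bij f" using assms by (simp add: tree_isom_def)
  have "length (inv_into UNIV f w) = length w" for w
    using tree_isom_length[OF assms, of "inv_into UNIV f w"] f by (simp add: surj_f_inv_f bij_is_surj)
  moreover have "inv_into UNIV f (take k w) = take k (inv_into UNIV f w)" for k w
    using tree_isom_take[OF assms, of k "inv_into UNIV f w"] f
    by (metis bij_inv_eq_iff surj_f_inv_f bij_is_surj)
  ultimately show ?thesis
    using f by (simp add: tree_isom_def bij_imp_bij_inv)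
qed

lemma group_W: "group W"
proof (rule groupI)
  fix x assume "x \<in> carrier W"
  then have x: "tree_isom x" by (simp add: W_carrier)
  then have "inv_into UNIV x \<otimes>\<^bsub>W\<^esub> x = \<one>\<^bsub>W\<^esub>"
    by (simp add: W_mult_eq W_one tree_isom_def bij_is_surj surj_iff [symmetric])
  then show "\<exists>y\<in>carrier W. y \<otimes>\<^bsub>W\<^esub> x = \<one>\<^bsub>W\<^esub>"
    using tree_isom_inv[OF x] by (auto simp: W_carrier)
qed (auto simp: W_carrier W_mult_eq W_one tree_isom_comp o_assoc, simp add: tree_isom_def)

interpretation W: group W
  by (rule group_W)

abbreviation W_mult (infixl "\<bullet>" 70) where "a \<bullet> b \<equiv> a \<otimes>\<^bsub>W\<^esub> b"
abbreviation W_inv where "W_inv a \<equiv> inv\<^bsub>W\<^esub> a"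

lemma W_assoc: "a \<bullet> b \<bullet> c = a \<bullet> (b \<bullet> c)"
  by (simp add: W_mult_eq o_assoc)

lemma W_one_left [simp]: "\<one>\<^bsub>W\<^esub> \<bullet> a = a" and W_one_right [simp]: "a \<bullet> \<one>\<^bsub>W\<^esub> = a"
  by (simp_all add: W_mult_eq W_one)

lemma W_cancel_left:
  assumes "x \<in> carrier W"
  shows "x \<bullet> (W_inv x \<bullet> y) = y" and "W_inv x \<bullet> (x \<bullet> y) = y"
  using assms by (simp_all add: W_assoc [symmetric])

text \<open>Composition is associative on all maps, so only the inverse laws in this
  normalisation carry carrier side conditions.\<close>

lemmas W_normalize = W_assoc W.inv_mult_group W_cancel_left

lemma tpair_simps [simp]:
  "tpair a b [] = []" "tpair a b (x # v) = x # (if x then b v else a v)"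
  by (simp_all add: tpair_def)

lemma sigma_simps [simp]: "sigma [] = []" "sigma (x # v) = (\<not> x) # v"
  by (simp_all add: sigma_def)

lemma tpair_comp: "tpair c d \<circ> tpair a b = tpair (c \<circ> a) (d \<circ> b)"
  by (rule ext) (simp add: tpair_def split: list.split)

lemma tpair_mult: "tpair a b \<bullet> tpair c d = tpair (a \<bullet> c) (b \<bullet> d)"
  by (simp add: W_mult_eq tpair_comp)

lemma tpair_one: "tpair \<one>\<^bsub>W\<^esub> \<one>\<^bsub>W\<^esub> = \<one>\<^bsub>W\<^esub>"
  by (rule ext) (simp add: W_one tpair_def split: list.split)

lemma sigma_square: "sigma \<bullet> sigma = \<one>\<^bsub>W\<^esub>"
  by (rule ext) (simp add: W_mult_eq W_one sigma_def split: list.split)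

lemma sigma_tpair: "sigma \<bullet> tpair a b = tpair b a \<bullet> sigma"
  by (rule ext) (simp add: W_mult_eq tpair_def sigma_def split: list.split)

lemma tpair_eq_iff: "tpair a b = tpair c d \<longleftrightarrow> a = c \<and> b = d"
proof
  assume h: "tpair a b = tpair c d"
  show "a = c \<and> b = d"
    using fun_cong[OF h, of "False # v" for v] fun_cong[OF h, of "True # v" for v] by auto
qed simp

lemma tpair_neq_tpair_sigma: "tpair a b \<noteq> tpair c d \<bullet> sigma"
proof
  assume "tpair a b = tpair c d \<bullet> sigma"
  from fun_cong[OF this, of "[False]"] show False by (simp add: W_mult_eq)
qed

lemma tree_isom_sigma: "tree_isom sigma"
proof -
  have "sigma \<circ> sigma = id" using sigma_square by (simp add: W_mult_eq W_one)
  then have "bij sigma" using o_bij by blast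
  moreover have "length (sigma w) = length w" for w by (cases w) auto
  moreover have "sigma (take k w) = take k (sigma w)" for k w by (cases w; cases k) auto
  ultimately show ?thesis by (simp add: tree_isom_def)
qed

lemma sigma_carrier: "sigma \<in> carrier W"
  using tree_isom_sigma by (simp add: W_carrier)

lemma sigma_inv: "W_inv sigma = sigma"
  using sigma_square sigma_carrier by (intro W.inv_equality) simp_all

lemma tree_isom_tpair_left:
  assumes g: "tree_isom (tpair a b)"
  shows "tree_isom a"
proof -
  have "length (a v) = length v" for v
    using tree_isom_length[OF g, of "False # v"] by simp
  moreover have "a (take k v) = take k (a v)" for k v
    using tree_isom_take[OF g, of "Suc k" "False # v"] by simp
  moreover have "inj a"
  proof
    fix v v' assume "a v = a v'"
    then have "tpair a b (False # v) = tpair a b (False # v')" by simp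
    then show "v = v'" using g unfolding tree_isom_def by (metis bij_is_inj injD list.inject)
  qed
  moreover have "w \<in> range a" for w
  proof -
    obtain z where z: "tpair a b z = False # w"
      using g by (metis tree_isom_def bij_is_surj surj_f_inv_f)
    then obtain v where "z = False # v"
      by (cases z) (auto split: if_splits)
    then show ?thesis using z by auto
  qed
  ultimately show ?thesis by (auto simp: tree_isom_def bij_def)
qed

lemma tpair_carrier_iff: "tpair a b \<in> carrier W \<longleftrightarrow> a \<in> carrier W \<and> b \<in> carrier W"
proof
  assume ab: "tpair a b \<in> carrier W"
  have "tpair b a = sigma \<bullet> tpair a b \<bullet> sigma"
    by (simp add: sigma_tpair W_assoc sigma_square)
  then have "tpair b a \<in> carrier W" using ab sigma_carrier by simp
  then show "a \<in> carrier W \<and> b \<in> carrier W"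
    using ab tree_isom_tpair_left by (simp add: W_carrier)
next
  assume ab: "a \<in> carrier W \<and> b \<in> carrier W"
  have "bij (tpair a b)"
  proof (rule o_bij)
    have "tpair a b \<bullet> tpair (W_inv a) (W_inv b) = \<one>\<^bsub>W\<^esub>"
      "tpair (W_inv a) (W_inv b) \<bullet> tpair a b = \<one>\<^bsub>W\<^esub>"
      using ab by (simp_all add: tpair_mult tpair_one)
    then show "tpair a b \<circ> tpair (W_inv a) (W_inv b) = id"
      "tpair (W_inv a) (W_inv b) \<circ> tpair a b = id"
      by (simp_all add: W_mult_eq W_one)
  qed
  moreover have "length (tpair a b w) = length w" for w
    using ab by (cases w) (auto simp: W_carrier tree_isom_def)
  moreover have "tpair a b (take k w) = take k (tpair a b w)" for k w
    using ab by (cases w; cases k) (auto simp: W_carrier tree_isom_def)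
  ultimately show "tpair a b \<in> carrier W" by (simp add: W_carrier tree_isom_def)
qed

lemma tpair_inv:
  "a \<in> carrier W \<Longrightarrow> b \<in> carrier W \<Longrightarrow> W_inv (tpair a b) = tpair (W_inv a) (W_inv b)"
  by (intro W.inv_equality) (simp_all add: tpair_mult tpair_one tpair_carrier_iff)

lemma tree_isom_Cons:
  assumes g: "tree_isom g"
  shows "g (x # v) = hd (g [x]) # tl (g (x # v))" and "length (g [x]) = 1"
proof -
  have "g [x] = take 1 (g (x # v))" using tree_isom_take[OF g, of 1 "x # v"] by simp
  moreover have "g (x # v) \<noteq> []" using tree_isom_length[OF g, of "x # v"] by auto
  ultimately show "g (x # v) = hd (g [x]) # tl (g (x # v))" by (cases "g (x # v)") auto
  show "length (g [x]) = 1" using tree_isom_length[OF g] by simp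
qed

lemma tree_isom_eq_tpair:
  assumes g: "tree_isom g" and root: "g [False] = [False]"
  shows "g = tpair (\<lambda>v. tl (g (False # v))) (\<lambda>v. tl (g (True # v)))"
proof
  have "g [True] \<noteq> g [False]" using g by (simp add: tree_isom_def bij_is_inj inj_eq)
  then have "g [True] = [True]"
    using tree_isom_Cons(2)[OF g, of True] root by (cases "g [True]") auto
  then have fixed: "g [x] = [x]" for x using root by (cases x) auto
  fix w
  show "g w = tpair (\<lambda>v. tl (g (False # v))) (\<lambda>v. tl (g (True # v))) w"
  proof (cases w)
    case Nil
    then show ?thesis using tree_isom_take[OF g, of 0] by simp
  next
    case (Cons x v)
    then have "g w = x # tl (g (x # v))" using tree_isom_Cons(1)[OF g, of x v] fixed[of x] by simp
    then show ?thesis using Cons by (cases x) simp_all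
  qed
qed

lemma W_cases:
  assumes "g \<in> carrier W"
  obtains a b where "a \<in> carrier W" "b \<in> carrier W" "g = tpair a b \<or> g = tpair a b \<bullet> sigma"
proof -
  have g: "tree_isom g" using assms by (simp add: W_carrier)
  have "\<exists>a b. h = tpair a b" if "h \<in> carrier W" "h [False] = [False]" for h
    using tree_isom_eq_tpair that by (auto simp: W_carrier)
  moreover have "g \<bullet> sigma \<in> carrier W" using assms sigma_carrier by simp
  moreover have "g [False] = [False] \<or> (g \<bullet> sigma) [False] = [False]"
    using tree_isom_Cons(2)[OF g, of False] by (cases "g [False]") (auto simp: W_mult_eq)
  moreover have "g = (g \<bullet> sigma) \<bullet> sigma" by (simp add: W_assoc sigma_square)
  ultimately have "\<exists>a b. g = tpair a b \<or> g = tpair a b \<bullet> sigma" using assms by metis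
  then obtain a b where ab: "g = tpair a b \<or> g = tpair a b \<bullet> sigma" by blast
  then have "tpair a b \<in> carrier W"
    using assms sigma_carrier by (metis W.m_closed W_assoc W_one_right sigma_square)
  then show thesis using that ab unfolding tpair_carrier_iff by blast
qed

section \<open>Groups of pairs congruent modulo a normal subgroup\<close>

text \<open>\<open>cong_pairs Y K\<close> is \<open>(K \<times> K){(y,y) : y \<in> Y}\<close> and \<open>cong_pairs_swap Y K\<close> is
  \<open>(K \<times> K)\<langle>\<sigma>\<rangle>{(y,y) : y \<in> Y}\<close> (\<open>prodset_sigma_diagset\<close>): the group \<open>R\<close> of the
  theorem for \<open>(Y, K) = (S, U)\<close>, and its normaliser for \<open>(Y, K) = (T, V)\<close>.\<close>

definition cong_pairs ::
    "(bool list \<Rightarrow> bool list) set \<Rightarrow> (bool list \<Rightarrow> bool list) set \<Rightarrow> (bool list \<Rightarrow> bool list) set"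
  where "cong_pairs Y K = {tpair x y | x y. x \<in> Y \<and> y \<in> Y \<and> x \<bullet> W_inv y \<in> K}"

definition cong_pairs_swap ::
    "(bool list \<Rightarrow> bool list) set \<Rightarrow> (bool list \<Rightarrow> bool list) set \<Rightarrow> (bool list \<Rightarrow> bool list) set"
  where "cong_pairs_swap Y K = cong_pairs Y K <#>\<^bsub>W\<^esub> {\<one>\<^bsub>W\<^esub>, sigma}"

lemma tpair_in_cong_pairs_iff [simp]:
  "tpair x y \<in> cong_pairs Y K \<longleftrightarrow> x \<in> Y \<and> y \<in> Y \<and> x \<bullet> W_inv y \<in> K"
  unfolding cong_pairs_def by (auto simp: tpair_eq_iff)

lemma cong_pairsE:
  assumes "g \<in> cong_pairs Y K"
  obtains x y where "x \<in> Y" "y \<in> Y" "x \<bullet> W_inv y \<in> K" "g = tpair x y"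
  using assms unfolding cong_pairs_def by blast

lemma mem_cong_pairs_swap_iff:
  "g \<in> cong_pairs_swap Y K \<longleftrightarrow> g \<in> cong_pairs Y K \<or> (\<exists>p\<in>cong_pairs Y K. g = p \<bullet> sigma)"
  unfolding cong_pairs_swap_def set_mult_def by auto

lemma cong_pairs_swapE:
  assumes "g \<in> cong_pairs_swap Y K"
  obtains x y where "x \<in> Y" "y \<in> Y" "x \<bullet> W_inv y \<in> K" "g = tpair x y \<or> g = tpair x y \<bullet> sigma"
  using assms unfolding mem_cong_pairs_swap_iff by (blast elim: cong_pairsE)

lemma tpair_in_cong_pairs_swap_iff [simp]:
  "tpair x y \<in> cong_pairs_swap Y K \<longleftrightarrow> tpair x y \<in> cong_pairs Y K"
  unfolding mem_cong_pairs_swap_iff by (auto elim: cong_pairsE simp: tpair_neq_tpair_sigma)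

lemma sigma_right_cancel: "p \<bullet> sigma = q \<bullet> sigma \<longleftrightarrow> p = q"
  by (metis W_assoc W_one_right sigma_square)

lemma tpair_sigma_in_cong_pairs_swap_iff [simp]:
  "tpair x y \<bullet> sigma \<in> cong_pairs_swap Y K \<longleftrightarrow> tpair x y \<in> cong_pairs Y K"
proof -
  have "tpair x y \<bullet> sigma \<notin> cong_pairs Y K"
    using tpair_neq_tpair_sigma by (metis cong_pairsE)
  then show ?thesis
    unfolding mem_cong_pairs_swap_iff sigma_right_cancel by auto
qed

context
  fixes Y K
  assumes Y: "subgroup Y W" and K: "K \<lhd> W\<lparr>carrier := Y\<rparr>"
begin

lemma subgroup_cong_pairs: "subgroup (cong_pairs Y K) W"
proof -
  have Yc: "y \<in> carrier W" if "y \<in> Y" for y using subgroup.mem_carrier[OF Y that] .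
  have KW: "subgroup K W" by (rule W.incl_subgroup[OF Y normal_imp_subgroup[OF K]])
  note conj = W.normal_subgroup_conj_closed[OF Y K]
  show ?thesis
  proof (rule W.subgroupI)
    show "cong_pairs Y K \<subseteq> carrier W"
      using Yc by (auto elim!: cong_pairsE simp: tpair_carrier_iff)
    have "tpair \<one>\<^bsub>W\<^esub> \<one>\<^bsub>W\<^esub> \<in> cong_pairs Y K"
      using subgroup.one_closed[OF Y] subgroup.one_closed[OF KW] by simp
    then show "cong_pairs Y K \<noteq> {}" by blast
  next
    fix g assume "g \<in> cong_pairs Y K"
    then obtain x y where h: "x \<in> Y" "y \<in> Y" "x \<bullet> W_inv y \<in> K" "g = tpair x y"
      by (rule cong_pairsE)
    have "W_inv x \<bullet> W_inv (x \<bullet> W_inv y) \<bullet> W_inv (W_inv x) \<in> K"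
      using conj h subgroup.m_inv_closed[OF Y] subgroup.m_inv_closed[OF KW] by blast
    then show "W_inv g \<in> cong_pairs Y K"
      using h Yc subgroup.m_inv_closed[OF Y] by (simp add: tpair_inv W_normalize)
  next
    fix g h assume "g \<in> cong_pairs Y K" "h \<in> cong_pairs Y K"
    then obtain x y x' y' where a: "x \<in> Y" "y \<in> Y" "x \<bullet> W_inv y \<in> K" "g = tpair x y"
      and b: "x' \<in> Y" "y' \<in> Y" "x' \<bullet> W_inv y' \<in> K" "h = tpair x' y'"
      by (meson cong_pairsE)
    have "x \<bullet> (x' \<bullet> W_inv y') \<bullet> W_inv x \<bullet> (x \<bullet> W_inv y) \<in> K"
      using conj a b subgroup.m_closed[OF KW] by blast
    then show "g \<bullet> h \<in> cong_pairs Y K"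
      using a b Yc subgroup.m_closed[OF Y] by (simp add: tpair_mult W_normalize)
  qed
qed

lemma subgroup_cong_pairs_swap: "subgroup (cong_pairs_swap Y K) W"
  unfolding cong_pairs_swap_def
proof (rule W.subgroup_set_mult_involution[OF subgroup_cong_pairs sigma_carrier sigma_square])
  fix p assume "p \<in> cong_pairs Y K"
  then obtain x y where h: "x \<in> Y" "y \<in> Y" "x \<bullet> W_inv y \<in> K" "p = tpair x y"
    by (rule cong_pairsE)
  have "W_inv (x \<bullet> W_inv y) \<in> K"
    using h subgroup.m_inv_closed[OF W.incl_subgroup[OF Y normal_imp_subgroup[OF K]]] by blast
  then have "y \<bullet> W_inv x \<in> K"
    using h subgroup.mem_carrier[OF Y] by (simp add: W_normalize)
  then show "sigma \<bullet> p \<bullet> sigma \<in> cong_pairs Y K"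
    using h by (simp add: sigma_tpair W_assoc sigma_square)
qed

end

lemma generate_sigma: "generate W {sigma} = {\<one>\<^bsub>W\<^esub>, sigma}"
proof
  show "generate W {sigma} \<subseteq> {\<one>\<^bsub>W\<^esub>, sigma}"
  proof
    fix x assume "x \<in> generate W {sigma}"
    then show "x \<in> {\<one>\<^bsub>W\<^esub>, sigma}"
      by induction (auto simp: sigma_inv sigma_square)
  qed
  show "{\<one>\<^bsub>W\<^esub>, sigma} \<subseteq> generate W {sigma}"
    by (simp add: generate.one generate.incl)
qed

lemma prodset_mult_diagset:
  assumes K: "subgroup K W" and Y: "subgroup Y W" and KY: "K \<subseteq> Y"
  shows "prodset K K <#>\<^bsub>W\<^esub> diagset Y = cong_pairs Y K"
proof (intro equalityI subsetI)
  fix g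
  assume "g \<in> prodset K K <#>\<^bsub>W\<^esub> diagset Y"
  then obtain u u' s where u: "u \<in> K" "u' \<in> K" and s: "s \<in> Y"
    and g: "g = tpair (u \<bullet> s) (u' \<bullet> s)"
    by (auto simp: set_mult_def prodset_def diagset_def tpair_mult)
  have "(u \<bullet> s) \<bullet> W_inv (u' \<bullet> s) = u \<bullet> W_inv u'"
    using u s KY subgroup.mem_carrier[OF Y] by (auto simp: W_normalize)
  then show "g \<in> cong_pairs Y K"
    using g u s KY subgroup.m_closed[OF Y] subgroup.m_closed[OF K] subgroup.m_inv_closed[OF K]
    by auto
next
  fix g
  assume "g \<in> cong_pairs Y K"
  then obtain x y where h: "x \<in> Y" "y \<in> Y" "x \<bullet> W_inv y \<in> K" "g = tpair x y"
    by (rule cong_pairsE)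
  have "g = tpair (x \<bullet> W_inv y) \<one>\<^bsub>W\<^esub> \<bullet> tpair y y"
    using h subgroup.mem_carrier[OF Y] by (simp add: tpair_mult W_normalize)
  then show "g \<in> prodset K K <#>\<^bsub>W\<^esub> diagset Y"
    using h subgroup.one_closed[OF K] unfolding set_mult_def prodset_def diagset_def by blast
qed

lemma prodset_sigma_diagset:
  assumes K: "subgroup K W" and Y: "subgroup Y W" and KY: "K \<subseteq> Y"
  shows "prodset K K <#>\<^bsub>W\<^esub> generate W {sigma} <#>\<^bsub>W\<^esub> diagset Y = cong_pairs_swap Y K"
proof -
  have Yc: "diagset Y \<subseteq> carrier W" "prodset K K \<subseteq> carrier W"
    using subgroup.mem_carrier[OF Y] subgroup.mem_carrier[OF K]
    by (auto simp: diagset_def prodset_def tpair_carrier_iff)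
  have E: "{\<one>\<^bsub>W\<^esub>, sigma} \<subseteq> carrier W" using sigma_carrier by simp
  have "{\<one>\<^bsub>W\<^esub>, sigma} <#>\<^bsub>W\<^esub> diagset Y = diagset Y <#>\<^bsub>W\<^esub> {\<one>\<^bsub>W\<^esub>, sigma}"
    by (auto simp: set_mult_def diagset_def sigma_tpair)
  then show ?thesis
    unfolding generate_sigma cong_pairs_swap_def prodset_mult_diagset[OF assms, symmetric]
    using W.set_mult_assoc Yc E by metis
qed

lemma cong_pairs_decomp:
  assumes "subgroup K W" "subgroup Y W" "p \<in> cong_pairs Y K"
  obtains k y where "k \<in> K" "y \<in> Y" "p = tpair \<one>\<^bsub>W\<^esub> k \<bullet> tpair y y"
proof -
  obtain x y where xy: "x \<in> Y" "y \<in> Y" "x \<bullet> W_inv y \<in> K" "p = tpair x y"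
    using assms(3) by (rule cong_pairsE)
  have xc: "x \<in> carrier W" and yc: "y \<in> carrier W" using xy subgroup.mem_carrier[OF assms(2)] by auto
  have "W_inv (x \<bullet> W_inv y) \<in> K" using xy subgroup.m_inv_closed[OF assms(1)] by blast
  moreover have "p = tpair \<one>\<^bsub>W\<^esub> (W_inv (x \<bullet> W_inv y)) \<bullet> tpair x x"
    using xy xc yc by (simp add: tpair_mult W_normalize)
  ultimately show thesis using that xy(1) by blast
qed

section \<open>The normaliser of \<open>R\<close>\<close>

lemma tpair_mult_assoc: "tpair a b \<bullet> (tpair c d \<bullet> z) = tpair (a \<bullet> c) (b \<bullet> d) \<bullet> z"
  by (simp add: W_assoc [symmetric] tpair_mult)

lemma sigma_tpair_assoc: "sigma \<bullet> (tpair a b \<bullet> z) = tpair b a \<bullet> (sigma \<bullet> z)"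
  by (simp add: W_assoc [symmetric] sigma_tpair)

lemma sigma_square_assoc: "sigma \<bullet> (sigma \<bullet> z) = z"
  by (simp add: W_assoc [symmetric] sigma_square)

lemmas tpair_sigma_normalize =
  W_assoc tpair_mult tpair_mult_assoc sigma_tpair sigma_tpair_assoc sigma_square sigma_square_assoc

locale tree_setting = omega_setting W S U for S U
begin

abbreviation "R \<equiv> cong_pairs_swap S U"
abbreviation "N \<equiv> normalizer W R"

lemma subgroup_R: "subgroup R W"
  by (rule subgroup_cong_pairs_swap[OF subgroup_S normal_U])

lemma sigma_in_R: "sigma \<in> R"
proof -
  have "tpair \<one>\<^bsub>W\<^esub> \<one>\<^bsub>W\<^esub> \<bullet> sigma \<in> R"
    using subgroup.one_closed[OF subgroup_S] subgroup.one_closed[OF subgroup_U]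
    by (simp del: W_one_left)
  then show ?thesis by (simp add: tpair_one)
qed

lemma R_carrier: "R \<subseteq> carrier W"
  by (rule subgroup.subset[OF subgroup_R])

lemma subgroup_N: "subgroup N W"
  by (rule W.normalizer_imp_subgroup[OF R_carrier])

lemma R_subset_N: "R \<subseteq> N"
  using subgroup.subset[OF normal_imp_subgroup[OF W.subgroup_in_normalizer[OF subgroup_R]]]
  by simp

lemma mem_N_iff:
  "g \<in> N \<longleftrightarrow> g \<in> carrier W \<and> (\<forall>r\<in>R. g \<bullet> r \<bullet> W_inv g \<in> R) \<and> (\<forall>r\<in>R. W_inv g \<bullet> r \<bullet> g \<in> R)"
  by (rule W.normalizer_iff[OF R_carrier])

lemma tpair_diag_conj_R:
  assumes t: "t \<in> T" and r: "r \<in> R"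
  shows "tpair t t \<bullet> r \<bullet> W_inv (tpair t t) \<in> R"
proof -
  have tc: "t \<in> carrier W" by (rule T_carrier[OF t])
  obtain x y where xy: "x \<in> S" "y \<in> S" "x \<bullet> W_inv y \<in> U"
    and r: "r = tpair x y \<or> r = tpair x y \<bullet> sigma"
    using r by (rule cong_pairs_swapE)
  have "t \<bullet> (x \<bullet> W_inv y) \<bullet> W_inv t \<in> U" by (rule T_conj_closed(1)[OF t xy(3)])
  then have "tpair (t \<bullet> x \<bullet> W_inv t) (t \<bullet> y \<bullet> W_inv t) \<in> cong_pairs S U"
    using T_conj_closed(2)[OF t] xy tc S_carrier by (simp add: W_normalize)
  moreover have "tpair t t \<bullet> tpair x y \<bullet> W_inv (tpair t t) = tpair (t \<bullet> x \<bullet> W_inv t) (t \<bullet> y \<bullet> W_inv t)"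
    "tpair t t \<bullet> (tpair x y \<bullet> sigma) \<bullet> W_inv (tpair t t)
      = tpair (t \<bullet> x \<bullet> W_inv t) (t \<bullet> y \<bullet> W_inv t) \<bullet> sigma"
    using tc by (simp_all add: tpair_inv tpair_sigma_normalize)
  ultimately show ?thesis using r by auto
qed

lemma tpair_one_conj_R:
  assumes w: "w \<in> V" and r: "r \<in> R"
  shows "tpair \<one>\<^bsub>W\<^esub> w \<bullet> r \<bullet> W_inv (tpair \<one>\<^bsub>W\<^esub> w) \<in> R"
proof -
  have wc: "w \<in> carrier W" and wS: "w \<in> S" and w': "W_inv w \<in> V"
    using w Omega_carrier Omega_subset_S subgroup.m_inv_closed[OF subgroup_Omega] by auto
  obtain x y where xy: "x \<in> S" "y \<in> S" "x \<bullet> W_inv y \<in> U"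
    and r: "r = tpair x y \<or> r = tpair x y \<bullet> sigma"
    using r by (rule cong_pairs_swapE)
  have xc: "x \<in> carrier W" and yc: "y \<in> carrier W" using xy S_carrier by auto
  have "(x \<bullet> W_inv y) \<bullet> (y \<bullet> w \<bullet> W_inv y \<bullet> W_inv w) \<in> U"
    using xy Omega_commutator'[OF w xy(2)] subgroup.m_closed[OF subgroup_U] by blast
  then have "tpair x (w \<bullet> y \<bullet> W_inv w) \<in> cong_pairs S U"
    using xy wS wc xc yc U_conj_closed subgroup.m_closed[OF subgroup_S]
      subgroup.m_inv_closed[OF subgroup_S] by (simp add: W_normalize)
  moreover
  \<comment> \<open>\<open>(x w\<inverse>)(w y)\<inverse> = (x y\<inverse>) (y w\<inverse> y\<inverse> w) (w w)\<inverse>\<close>\<close>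
  have "(x \<bullet> W_inv y) \<bullet> (y \<bullet> W_inv w \<bullet> W_inv y \<bullet> w) \<bullet> W_inv (w \<bullet> w) \<in> U"
    using xy Omega_commutator'[OF w' xy(2)] Omega_square[OF w]
      subgroup.m_closed[OF subgroup_U] subgroup.m_inv_closed[OF subgroup_U] wc by simp
  then have "tpair (x \<bullet> W_inv w) (w \<bullet> y) \<in> cong_pairs S U"
    using xy wS wc xc yc subgroup.m_closed[OF subgroup_S] subgroup.m_inv_closed[OF subgroup_S]
    by (simp add: W_normalize)
  moreover have "tpair \<one>\<^bsub>W\<^esub> w \<bullet> tpair x y \<bullet> W_inv (tpair \<one>\<^bsub>W\<^esub> w) = tpair x (w \<bullet> y \<bullet> W_inv w)"
    "tpair \<one>\<^bsub>W\<^esub> w \<bullet> (tpair x y \<bullet> sigma) \<bullet> W_inv (tpair \<one>\<^bsub>W\<^esub> w)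
      = tpair (x \<bullet> W_inv w) (w \<bullet> y) \<bullet> sigma"
    using wc by (simp_all add: tpair_inv tpair_sigma_normalize)
  ultimately show ?thesis using r by auto
qed

lemma tpair_diag_in_N: "t \<in> T \<Longrightarrow> tpair t t \<in> N"
proof -
  assume t: "t \<in> T"
  have tc: "t \<in> carrier W" and t': "W_inv t \<in> T"
    using T_carrier[OF t] subgroup.m_inv_closed[OF subgroup_T t] .
  have "W_inv (tpair t t) \<bullet> r \<bullet> tpair t t \<in> R" if "r \<in> R" for r
    using tpair_diag_conj_R[OF t' that] tc by (simp add: tpair_inv)
  then show ?thesis
    using mem_N_iff tpair_diag_conj_R[OF t] tc by (simp add: tpair_carrier_iff)
qed

lemma tpair_one_in_N: "w \<in> V \<Longrightarrow> tpair \<one>\<^bsub>W\<^esub> w \<in> N"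
proof -
  assume w: "w \<in> V"
  have wc: "w \<in> carrier W" and w': "W_inv w \<in> V"
    using Omega_carrier[OF w] subgroup.m_inv_closed[OF subgroup_Omega w] .
  have "W_inv (tpair \<one>\<^bsub>W\<^esub> w) \<bullet> r \<bullet> tpair \<one>\<^bsub>W\<^esub> w \<in> R" if "r \<in> R" for r
    using tpair_one_conj_R[OF w' that] wc by (simp add: tpair_inv)
  then show ?thesis
    using mem_N_iff tpair_one_conj_R[OF w] wc by (simp add: tpair_carrier_iff)
qed

lemma cong_pairs_swap_subset_N: "cong_pairs_swap T V \<subseteq> N"
proof
  fix g assume "g \<in> cong_pairs_swap T V"
  then obtain p where p: "p \<in> cong_pairs T V" and g: "g = p \<or> g = p \<bullet> sigma"
    unfolding mem_cong_pairs_swap_iff by blast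
  obtain w t where "w \<in> V" "t \<in> T" "p = tpair \<one>\<^bsub>W\<^esub> w \<bullet> tpair t t"
    using subgroup_Omega subgroup_T p by (rule cong_pairs_decomp)
  then have "p \<in> N"
    using tpair_one_in_N tpair_diag_in_N subgroup.m_closed[OF subgroup_N] by simp
  then show "g \<in> N"
    using g sigma_in_R R_subset_N subgroup.m_closed[OF subgroup_N] by blast
qed

lemma tpair_in_N_conj_closed:
  assumes ab: "tpair a b \<in> N"
  shows "s \<in> S \<Longrightarrow> a \<bullet> s \<bullet> W_inv a \<in> S \<and> b \<bullet> s \<bullet> W_inv b \<in> S
      \<and> (a \<bullet> s \<bullet> W_inv a) \<bullet> W_inv (b \<bullet> s \<bullet> W_inv b) \<in> U"
    and "u \<in> U \<Longrightarrow> a \<bullet> u \<bullet> W_inv a \<in> U \<and> b \<bullet> u \<bullet> W_inv b \<in> U"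
proof -
  have c: "a \<in> carrier W" "b \<in> carrier W"
    using subgroup.mem_carrier[OF subgroup_N ab] by (simp_all add: tpair_carrier_iff)
  have conj: "tpair (a \<bullet> x \<bullet> W_inv a) (b \<bullet> y \<bullet> W_inv b) \<in> cong_pairs S U"
    if "tpair x y \<in> cong_pairs S U" for x y
  proof -
    have "tpair a b \<bullet> tpair x y \<bullet> W_inv (tpair a b) \<in> R"
      using that ab mem_N_iff by simp
    then show ?thesis using c by (simp add: tpair_inv tpair_mult)
  qed
  show "s \<in> S \<Longrightarrow> a \<bullet> s \<bullet> W_inv a \<in> S \<and> b \<bullet> s \<bullet> W_inv b \<in> S
      \<and> (a \<bullet> s \<bullet> W_inv a) \<bullet> W_inv (b \<bullet> s \<bullet> W_inv b) \<in> U"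
    using conj[of s s] S_carrier subgroup.one_closed[OF subgroup_U] by simp
  assume u: "u \<in> U"
  have "a \<bullet> u \<bullet> W_inv a \<in> U"
    using conj[of u "\<one>\<^bsub>W\<^esub>"] u U_subset_S subgroup.one_closed[OF subgroup_S] c by auto
  moreover have "W_inv (b \<bullet> u \<bullet> W_inv b) \<in> U"
    using conj[of "\<one>\<^bsub>W\<^esub>" u] u U_subset_S subgroup.one_closed[OF subgroup_S]
      subgroup.m_inv_closed[OF subgroup_U] U_carrier c by auto
  then have "b \<bullet> u \<bullet> W_inv b \<in> U"
    using subgroup.m_inv_closed[OF subgroup_U] c U_carrier[OF u] by fastforce
  ultimately show "a \<bullet> u \<bullet> W_inv a \<in> U \<and> b \<bullet> u \<bullet> W_inv b \<in> U" by blast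
qed

lemma tpair_in_N_T:
  assumes ab: "tpair a b \<in> N"
  shows "a \<in> T \<and> b \<in> T"
proof -
  have c: "a \<in> carrier W" "b \<in> carrier W"
    using subgroup.mem_carrier[OF subgroup_N ab] by (simp_all add: tpair_carrier_iff)
  have "tpair (W_inv a) (W_inv b) \<in> N"
    using subgroup.m_inv_closed[OF subgroup_N ab] c by (simp add: tpair_inv)
  then show ?thesis
    using tpair_in_N_conj_closed[OF ab] tpair_in_N_conj_closed[of "W_inv a" "W_inv b"] c
    unfolding mem_T_iff by simp
qed

lemma tpair_in_N_Omega:
  assumes ab: "tpair a b \<in> N"
  shows "a \<bullet> W_inv b \<in> V"
proof (rule mem_OmegaI)
  have c: "a \<in> carrier W" "b \<in> carrier W"
    using subgroup.mem_carrier[OF subgroup_N ab] by (simp_all add: tpair_carrier_iff)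
  have "tpair a b \<bullet> sigma \<bullet> W_inv (tpair a b) \<in> R"
    using ab sigma_in_R mem_N_iff by blast
  moreover have "tpair a b \<bullet> sigma \<bullet> W_inv (tpair a b) = tpair (a \<bullet> W_inv b) (b \<bullet> W_inv a) \<bullet> sigma"
    using c by (simp add: tpair_inv tpair_sigma_normalize)
  ultimately show "a \<bullet> W_inv b \<in> S" "(a \<bullet> W_inv b) \<bullet> (a \<bullet> W_inv b) \<in> U"
    using c by (simp_all add: W_normalize)
  fix s assume s: "s \<in> S"
  have "W_inv b \<bullet> s \<bullet> b \<in> S" using T_conj_closed'(2)[OF _ s] tpair_in_N_T[OF ab] by blast
  then have "(a \<bullet> (W_inv b \<bullet> s \<bullet> b) \<bullet> W_inv a) \<bullet> W_inv (b \<bullet> (W_inv b \<bullet> s \<bullet> b) \<bullet> W_inv b) \<in> U"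
    using tpair_in_N_conj_closed(1)[OF ab] by blast
  then show "a \<bullet> W_inv b \<bullet> s \<bullet> W_inv (a \<bullet> W_inv b) \<bullet> W_inv s \<in> U"
    using c S_carrier[OF s] by (simp add: W_normalize)
qed

lemma N_eq: "N = cong_pairs_swap T V"
proof
  show "N \<subseteq> cong_pairs_swap T V"
  proof
    fix g assume g: "g \<in> N"
    obtain a b where "g = tpair a b \<or> g = tpair a b \<bullet> sigma"
      using W_cases subgroup.mem_carrier[OF subgroup_N g] by metis
    moreover have "g \<bullet> sigma \<in> N"
      using g sigma_in_R R_subset_N subgroup.m_closed[OF subgroup_N] by blast
    ultimately have g': "tpair a b \<in> N" "g = tpair a b \<or> g = tpair a b \<bullet> sigma"
      using g by (auto simp: W_assoc sigma_square)
    then have "tpair a b \<in> cong_pairs T V"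
      using tpair_in_N_T tpair_in_N_Omega by simp
    then show "g \<in> cong_pairs_swap T V" using g'(2) by auto
  qed
  show "cong_pairs_swap T V \<subseteq> N" by (rule cong_pairs_swap_subset_N)
qed

lemma gcomm_tpair_Omega_R:
  assumes v: "v \<in> V" "v' \<in> V" and r: "r \<in> R"
  shows "gcomm W (tpair v v') r \<in> cong_pairs V U"
proof -
  have vc: "v \<in> carrier W" "v' \<in> carrier W" using v Omega_carrier by auto
  obtain x y where xy: "x \<in> S" "y \<in> S" and r: "r = tpair x y \<or> r = tpair x y \<bullet> sigma"
    using r by (rule cong_pairs_swapE)
  have c: "x \<in> carrier W" "y \<in> carrier W" using xy S_carrier by auto
  have u: "gcomm W v x \<in> U" "gcomm W v' y \<in> U"
    using gcomm_Omega_S v xy by auto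
  have uV: "gcomm W v x \<in> V" "gcomm W v' y \<in> V" using u U_subset_Omega by auto
  have "gcomm W (tpair v v') (tpair x y) = tpair (gcomm W v x) (gcomm W v' y)"
    using vc c by (simp add: gcomm_def tpair_inv tpair_mult)
  moreover have "tpair (gcomm W v x) (gcomm W v' y) \<in> cong_pairs V U"
    using u uV subgroup.m_closed[OF subgroup_U] subgroup.m_inv_closed[OF subgroup_U] by simp
  moreover
  define d where "d = W_inv v \<bullet> v'"
  have d: "d \<in> V" "d \<in> carrier W"
    unfolding d_def using v vc subgroup.m_closed[OF subgroup_Omega] subgroup.m_inv_closed[OF subgroup_Omega]
    by auto
  have "gcomm W (tpair v v') (tpair x y \<bullet> sigma) = tpair (d \<bullet> gcomm W v' y) (W_inv d \<bullet> gcomm W v x)"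
    using vc c sigma_carrier unfolding d_def
    by (simp add: gcomm_def tpair_inv sigma_inv tpair_carrier_iff tpair_sigma_normalize W_normalize)
  \<comment> \<open>modulo \<open>U\<close> the two entries are \<open>d\<close> and \<open>d\<inverse>\<close>, and \<open>d\<^sup>2 \<in> U\<close>\<close>
  moreover have "tpair (d \<bullet> gcomm W v' y) (W_inv d \<bullet> gcomm W v x) \<in> cong_pairs V U"
  proof -
    have "d \<bullet> (gcomm W v' y \<bullet> W_inv (gcomm W v x)) \<bullet> W_inv d \<bullet> (d \<bullet> d) \<in> U"
      using U_conj_closed Omega_subset_S d u Omega_square[OF d(1)]
        subgroup.m_closed[OF subgroup_U] subgroup.m_inv_closed[OF subgroup_U] by blast
    then show ?thesis
      using d uV u U_carrier subgroup.m_closed[OF subgroup_Omega] subgroup.m_inv_closed[OF subgroup_Omega]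
      by (simp add: W_normalize)
  qed
  ultimately show ?thesis using r by auto
qed

lemma comm_subgroup_prodset_R:
  "comm_subgroup W (prodset V V) R \<subseteq> prodset U U <#>\<^bsub>W\<^esub> diagset V"
proof -
  have "{gcomm W g r | g r. g \<in> prodset V V \<and> r \<in> R} \<subseteq> cong_pairs V U"
    using gcomm_tpair_Omega_R by (auto simp: prodset_def)
  then have "comm_subgroup W (prodset V V) R \<subseteq> cong_pairs V U"
    unfolding comm_subgroup_def
    by (rule W.generate_subgroup_incl[OF _ subgroup_cong_pairs[OF subgroup_Omega normal_U_Omega]])
  then show ?thesis
    by (simp add: prodset_mult_diagset[OF subgroup_U subgroup_Omega U_subset_Omega])
qed

abbreviation "N_mod_R \<equiv> W\<lparr>carrier := N\<rparr> Mod R"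

lemma normal_R_N: "R \<lhd> W\<lparr>carrier := N\<rparr>"
  by (rule W.subgroup_in_normalizer[OF subgroup_R])

definition embed_Omega :: "(bool list \<Rightarrow> bool list) \<Rightarrow> (bool list \<Rightarrow> bool list) set"
  where "embed_Omega v = R #>\<^bsub>W\<^esub> tpair \<one>\<^bsub>W\<^esub> v"

definition embed_T :: "(bool list \<Rightarrow> bool list) \<Rightarrow> (bool list \<Rightarrow> bool list) set"
  where "embed_T t = R #>\<^bsub>W\<^esub> tpair t t"

lemma group_hom_embed_Omega: "group_hom (W\<lparr>carrier := V\<rparr>) N_mod_R embed_Omega"
proof (intro group_hom.intro group_hom_axioms.intro)
  show "group (W\<lparr>carrier := V\<rparr>)" by (rule W.subgroup_imp_group[OF subgroup_Omega])
  show "group N_mod_R" by (rule normal.factorgroup_is_group[OF normal_R_N])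
  show "embed_Omega \<in> hom (W\<lparr>carrier := V\<rparr>) N_mod_R"
    unfolding hom_def embed_Omega_def carrier_FactGroup_update
    using tpair_one_in_N mult_FactGroup_update[OF normal_R_N] subgroup.m_closed[OF subgroup_Omega]
    by (auto simp: tpair_mult)
qed

lemma group_hom_embed_T: "group_hom (W\<lparr>carrier := T\<rparr>) N_mod_R embed_T"
proof (intro group_hom.intro group_hom_axioms.intro)
  show "group (W\<lparr>carrier := T\<rparr>)" by (rule W.subgroup_imp_group[OF subgroup_T])
  show "group N_mod_R" by (rule normal.factorgroup_is_group[OF normal_R_N])
  show "embed_T \<in> hom (W\<lparr>carrier := T\<rparr>) N_mod_R"
    unfolding hom_def embed_T_def carrier_FactGroup_update
    using tpair_diag_in_N mult_FactGroup_update[OF normal_R_N] subgroup.m_closed[OF subgroup_T]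
    by (auto simp: tpair_mult)
qed

lemma kernel_embed_Omega: "kernel (W\<lparr>carrier := V\<rparr>) N_mod_R embed_Omega = U"
proof -
  have "embed_Omega v = R \<longleftrightarrow> v \<in> U" if v: "v \<in> V" for v
  proof -
    have vc: "v \<in> carrier W" by (rule Omega_carrier[OF v])
    have "embed_Omega v = R \<longleftrightarrow> tpair \<one>\<^bsub>W\<^esub> v \<in> R"
      unfolding embed_Omega_def using vc
      by (intro W.rcos_eq_self_iff[OF subgroup_R]) (simp add: tpair_carrier_iff)
    also have "\<dots> \<longleftrightarrow> W_inv v \<in> U"
      using v Omega_subset_S subgroup.one_closed[OF subgroup_S] by auto
    also have "\<dots> \<longleftrightarrow> v \<in> U"
      using subgroup.m_inv_closed[OF subgroup_U] vc by fastforce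
    finally show ?thesis .
  qed
  then show ?thesis
    unfolding kernel_def using U_subset_Omega by (auto simp: FactGroup_def)
qed

lemma kernel_embed_T: "kernel (W\<lparr>carrier := T\<rparr>) N_mod_R embed_T = S"
proof -
  have "embed_T t = R \<longleftrightarrow> t \<in> S" if t: "t \<in> T" for t
  proof -
    have tc: "t \<in> carrier W" by (rule T_carrier[OF t])
    have "embed_T t = R \<longleftrightarrow> tpair t t \<in> R"
      unfolding embed_T_def using tc
      by (intro W.rcos_eq_self_iff[OF subgroup_R]) (simp add: tpair_carrier_iff)
    also have "\<dots> \<longleftrightarrow> t \<in> S"
      using tc subgroup.one_closed[OF subgroup_U] by simp
    finally show ?thesis .
  qed
  then show ?thesis
    unfolding kernel_def using S_subset_T by (auto simp: FactGroup_def)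
qed

lemma embed_images_product:
  "embed_Omega ` V <#>\<^bsub>N_mod_R\<^esub> embed_T ` T = carrier N_mod_R"
proof
  show "embed_Omega ` V <#>\<^bsub>N_mod_R\<^esub> embed_T ` T \<subseteq> carrier N_mod_R"
    using group_hom.hom_closed[OF group_hom_embed_Omega] group_hom.hom_closed[OF group_hom_embed_T]
    by (intro group.setmult_subset_G[OF normal.factorgroup_is_group[OF normal_R_N]]) auto
  show "carrier N_mod_R \<subseteq> embed_Omega ` V <#>\<^bsub>N_mod_R\<^esub> embed_T ` T"
  proof
    fix C assume "C \<in> carrier N_mod_R"
    then obtain n where n: "n \<in> N" "C = R #>\<^bsub>W\<^esub> n"
      unfolding carrier_FactGroup_update by blast
    then obtain p where p: "p \<in> cong_pairs T V" and np: "n = p \<or> n = p \<bullet> sigma"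
      unfolding N_eq mem_cong_pairs_swap_iff by blast
    obtain w t where w: "w \<in> V" and t: "t \<in> T" and pwt: "p = tpair \<one>\<^bsub>W\<^esub> w \<bullet> tpair t t"
      using subgroup_Omega subgroup_T p by (rule cong_pairs_decomp)
    have pN: "p \<in> N" using p N_eq by (auto simp: mem_cong_pairs_swap_iff)
    have "R #>\<^bsub>W\<^esub> p = R #>\<^bsub>W\<^esub> n"
    proof (rule W.rcos_eqI[OF subgroup_R])
      show "p \<in> carrier W" "n \<in> carrier W" using pN n(1) subgroup.mem_carrier[OF subgroup_N] by auto
      show "n \<bullet> W_inv p \<in> R"
        using np pN sigma_in_R mem_N_iff subgroup.one_closed[OF subgroup_R] \<open>p \<in> carrier W\<close> by auto
    qed
    moreover have "R #>\<^bsub>W\<^esub> p = embed_Omega w \<otimes>\<^bsub>N_mod_R\<^esub> embed_T t"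
      unfolding embed_Omega_def embed_T_def pwt
      using mult_FactGroup_update[OF normal_R_N tpair_one_in_N[OF w] tpair_diag_in_N[OF t]] by simp
    ultimately show "C \<in> embed_Omega ` V <#>\<^bsub>N_mod_R\<^esub> embed_T ` T"
      using n(2) w t unfolding set_mult_def by blast
  qed
qed

lemma R_eq_prodset: "prodset U U <#>\<^bsub>W\<^esub> generate W {sigma} <#>\<^bsub>W\<^esub> diagset S = R"
  by (rule prodset_sigma_diagset[OF subgroup_U subgroup_S U_subset_S])

lemma N_eq_prodset: "N = prodset V V <#>\<^bsub>W\<^esub> generate W {sigma} <#>\<^bsub>W\<^esub> diagset T"
  unfolding N_eq by (rule prodset_sigma_diagset[OF subgroup_Omega subgroup_T Omega_subset_T, symmetric])

lemma subgroup_embed_Omega_image: "subgroup (embed_Omega ` V) N_mod_R"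
  using group_hom.img_is_subgroup[OF group_hom_embed_Omega] by simp

lemma subgroup_embed_T_image: "subgroup (embed_T ` T) N_mod_R"
  using group_hom.img_is_subgroup[OF group_hom_embed_T] by simp

lemma embed_Omega_image_iso: "N_mod_R\<lparr>carrier := embed_Omega ` V\<rparr> \<cong> V_mod_U"
  using group_hom.image_iso_FactGroup_kernel[OF group_hom_embed_Omega] by (simp add: kernel_embed_Omega)

lemma embed_T_image_iso: "N_mod_R\<lparr>carrier := embed_T ` T\<rparr> \<cong> T_mod_S"
  using group_hom.image_iso_FactGroup_kernel[OF group_hom_embed_T] by (simp add: kernel_embed_T)

end

theorem theorem4p4:
  fixes U S :: "(bool list \<Rightarrow> bool list) set"
  assumes "subgroup S W"
    and "normal U (W\<lparr>carrier := S\<rparr>)"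
  defines "R \<equiv> prodset U U <#>\<^bsub>W\<^esub> generate W {sigma} <#>\<^bsub>W\<^esub> diagset S"
    and "V \<equiv> Omega W S U"
    and "T \<equiv> normalizer W U \<inter> normalizer W S"
  shows "(normalizer W R = prodset V V <#>\<^bsub>W\<^esub> generate W {sigma} <#>\<^bsub>W\<^esub> diagset T)
    \<and> normal V (W\<lparr>carrier := T\<rparr>)
    \<and> comm_subgroup W (prodset V V) R \<subseteq> prodset U U <#>\<^bsub>W\<^esub> diagset V
    \<and> comm_group (W\<lparr>carrier := V\<rparr> Mod U)
         \<and> (\<exists>\<phi>. group_action (W\<lparr>carrier := T\<rparr> Mod S) (carrier (W\<lparr>carrier := V\<rparr> Mod U)) \<phi>
             \<and> (\<forall>g \<in> carrier (W\<lparr>carrier := T\<rparr> Mod S).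
                   \<phi> g \<in> hom (W\<lparr>carrier := V\<rparr> Mod U) (W\<lparr>carrier := V\<rparr> Mod U))
             \<and> (\<forall>t \<in> T. \<forall>v \<in> V. \<phi> (S #>\<^bsub>W\<^esub> t) (U #>\<^bsub>W\<^esub> v)
                   = U #>\<^bsub>W\<^esub> (t \<otimes>\<^bsub>W\<^esub> v \<otimes>\<^bsub>W\<^esub> inv\<^bsub>W\<^esub> t)))
    \<and> (\<exists>A B. subgroup A (W\<lparr>carrier := normalizer W R\<rparr> Mod R)
           \<and> subgroup B (W\<lparr>carrier := normalizer W R\<rparr> Mod R)
           \<and> A <#>\<^bsub>W\<lparr>carrier := normalizer W R\<rparr> Mod R\<^esub> B
               = carrier (W\<lparr>carrier := normalizer W R\<rparr> Mod R)
           \<and> (W\<lparr>carrier := normalizer W R\<rparr> Mod R)\<lparr>carrier := A\<rparr> \<cong> (W\<lparr>carrier := V\<rparr> Mod U)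
           \<and> (W\<lparr>carrier := normalizer W R\<rparr> Mod R)\<lparr>carrier := B\<rparr> \<cong> (W\<lparr>carrier := T\<rparr> Mod S))"
proof -
  interpret tree_setting S U
    using group_W assms(1,2) by (simp add: tree_setting_def omega_setting_def omega_setting_axioms_def)
  show ?thesis
    unfolding R_def V_def T_def R_eq_prodset
    using N_eq_prodset normal_Omega_T comm_subgroup_prodset_R comm_group_Omega_Mod
      group_action_conj_action conj_action_hom conj_action_coset
      subgroup_embed_Omega_image subgroup_embed_T_image embed_images_product
      embed_Omega_image_iso embed_T_image_iso
    by blast
qed

end
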